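(* Let $$\mathcal{Q}=\{(x,y,t)\in\mathbb{R}^3:\ 1-x^2-y^2=\cos(t)\,((1+x)^2+y^2)\}.$$ The connected components of $\mathcal{Q}\cap\{x^2+y^2<1\}$ are the sets $\mathcal{Q}_k=\{(x,y,t): x^2+y^2<1,\ 1-x^2-y^2=\cos t\,((1+x)^2+y^2),\ t\in(2\pi k-\pi/2,\,2\pi k+\pi/2)\}$, $k\in\mathbb{Z}$, and each $\mathcal{Q}_k$, viewed in $\mathbb{D}\times\mathbb{R}$, is a properly embedded minimal surface congruent (by the isometry $g\times$(vertical translation)) to the parabolic catenoid $\Psi_1(\mathbb{R}\times(0,\pi))$, where $\Psi_1(x,t)=(x,\sin t,t)\in\mathfrak{H}\times\mathbb{R}$.
   Context: $\mathbb{D}=\{z:|z|<1\}$ with metric $\frac{4|dz|^2}{(1-|z|^2)^2}$ and $\mathfrak{H}=\{x+{\rm i}y:y>0\}$ with metric $\frac{dx^2+dy^2}{y^2}$ are models of $\mathbb{H}^2$; products with $\mathbb{R}$ carry the product metric with $dt^2$. The isometry $g:\mathbb{D}\to\mathfrak{H}$ is $g(z)={\rm i}\frac{1-z}{1+z}$. Points of $\mathbb{D}\times\mathbb{R}$ are identified with $(x,y,t)\in\mathbb{R}^3$, $x^2+y^2<1$, $z=x+{\rm i}y$. *)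

theory Defs
  imports "HOL-Analysis.Analysis"
begin

type_synonym pt3 = "real \<times> real \<times> real"

definition coord3 :: "nat \<Rightarrow> pt3 \<Rightarrow> real" where
  "coord3 i p = (case p of (x,y,t) \<Rightarrow> if i = 0 then x else if i = 1 then y else t)"

definition upd3 :: "nat \<Rightarrow> pt3 \<Rightarrow> real \<Rightarrow> pt3" where
  "upd3 i p s = (case p of (x,y,t) \<Rightarrow>
      if i = 0 then (s,y,t) else if i = 1 then (x,s,t) else (x,y,s))"

definition pd :: "nat \<Rightarrow> (pt3 \<Rightarrow> real) \<Rightarrow> pt3 \<Rightarrow> real" where
  "pd i F p = deriv (\<lambda>s. F (upd3 i p s)) (coord3 i p)"

definition has_partials_on :: "(pt3 \<Rightarrow> real) \<Rightarrow> pt3 set \<Rightarrow> bool" where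
  "has_partials_on F U \<longleftrightarrow>
     (\<forall>i<3. \<forall>p\<in>U. (\<lambda>s. F (upd3 i p s)) differentiable (at (coord3 i p)))"

definition C2_on :: "pt3 set \<Rightarrow> (pt3 \<Rightarrow> real) \<Rightarrow> bool" where
  "C2_on U F \<longleftrightarrow> continuous_on U F \<and> has_partials_on F U \<and>
     (\<forall>i<3. continuous_on U (pd i F) \<and> has_partials_on (pd i F) U \<and>
        (\<forall>j<3. continuous_on U (pd j (pd i F))))"

text \<open>Minimal (embedded) surface S in an open set \<Omega> of R^3 equipped with the metric
  lam(x,y,t)^2 (dx^2+dy^2) + dt^2 (lam independent of t): locally S is the regular
  zero set of a C^2 function F, and the mean curvature div_g(grad F/|grad F|) vanishes.
  With sqrt(det g) = lam^2, grad F = (F_x/lam^2, F_y/lam^2, F_t), this divergence is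
  (1/lam^2)[d_x(F_x/n) + d_y(F_y/n)] + d_t(F_t/n), n = |grad F|_g.\<close>
definition minimal_surface_in :: "(pt3 \<Rightarrow> real) \<Rightarrow> pt3 set \<Rightarrow> pt3 set \<Rightarrow> bool" where
  "minimal_surface_in lam \<Omega> S \<longleftrightarrow> S \<subseteq> \<Omega> \<and>
     (\<forall>p\<in>S. \<exists>U F. open U \<and> p \<in> U \<and> U \<subseteq> \<Omega> \<and> C2_on U F \<and>
        S \<inter> U = {q\<in>U. F q = 0} \<and>
        (\<forall>q\<in>S \<inter> U. (\<exists>i<3. pd i F q \<noteq> 0) \<and>
           (let n = (\<lambda>r. sqrt (((pd 0 F r)\<^sup>2 + (pd 1 F r)\<^sup>2) / (lam r)\<^sup>2 + (pd 2 F r)\<^sup>2))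
            in pd 0 (\<lambda>r. pd 0 F r / n r) q + pd 1 (\<lambda>r. pd 1 F r / n r) q
               + (lam q)\<^sup>2 * pd 2 (\<lambda>r. pd 2 F r / n r) q = 0)))"

definition DR :: "pt3 set" where
  "DR = {(x,y,t). x\<^sup>2 + y\<^sup>2 < 1}"

definition lamD :: "pt3 \<Rightarrow> real" where
  "lamD p = (case p of (x,y,t) \<Rightarrow> 2 / (1 - x\<^sup>2 - y\<^sup>2))"

definition properly_embedded_minimal_DR :: "pt3 set \<Rightarrow> bool" where
  "properly_embedded_minimal_DR S \<longleftrightarrow> minimal_surface_in lamD DR S \<and> closedin (top_of_set DR) S"

definition Qset :: "pt3 set" where
  "Qset = {(x,y,t). 1 - x\<^sup>2 - y\<^sup>2 = cos t * ((1 + x)\<^sup>2 + y\<^sup>2)}"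

definition Qk :: "int \<Rightarrow> pt3 set" where
  "Qk k = {(x,y,t). x\<^sup>2 + y\<^sup>2 < 1 \<and> 1 - x\<^sup>2 - y\<^sup>2 = cos t * ((1 + x)\<^sup>2 + y\<^sup>2) \<and>
              2 * pi * real_of_int k - pi / 2 < t \<and> t < 2 * pi * real_of_int k + pi / 2}"

text \<open>The isometry g : D \<rightarrow> upper half plane.\<close>
definition gmap :: "complex \<Rightarrow> complex" where
  "gmap z = \<i> * (1 - z) / (1 + z)"

text \<open>g times vertical translation by c, on points (x,y,t), H x R written as (u,v,t), v>0.\<close>
definition gtrans :: "real \<Rightarrow> pt3 \<Rightarrow> pt3" where
  "gtrans c p = (case p of (x,y,t) \<Rightarrow> (Re (gmap (Complex x y)), Im (gmap (Complex x y)), t + c))"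

definition Psi1 :: "real \<times> real \<Rightarrow> pt3" where
  "Psi1 p = (case p of (x,t) \<Rightarrow> (x, sin t, t))"

end

(*
  Write hgt x y = Im (gmap (x + i y)) for the height of the image point in the upper
  half-plane, so that Q is the level set hgt = cos t.  Inside the disc hgt > 0, hence
  cos t > 0 on Q, and the zeros of cos cut Q into the pieces Q_k lying over the intervals
  (2 pi k - pi/2, 2 pi k + pi/2).  Each Q_k is connected because it is the image of
  R x (0, pi) under (u, s) |-> (gmap^-1 (u + i sin s), s - c_k), and the same chart shows
  that gmap x (t |-> t + c_k) maps Q_k onto Psi1 (R x (0, pi)).
  Minimality is a computation with the global defining function hgt - cos t: hgt is
  harmonic and |grad hgt| = lamD * hgt, and on the surface cos t = hgt, so the terms of
  the mean curvature cancel.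
*)

theory Submission
  imports Defs
begin

section \<open>Partial derivatives along coordinate lines\<close>

definition has_partial_derivative :: "nat \<Rightarrow> (pt3 \<Rightarrow> real) \<Rightarrow> real \<Rightarrow> pt3 \<Rightarrow> bool" where
  "has_partial_derivative i F d p \<longleftrightarrow>
     ((\<lambda>s. F (upd3 i p s)) has_real_derivative d) (at (coord3 i p))"

lemma has_partial_derivative_coords:
  "has_partial_derivative 0 F d (x,y,t) \<longleftrightarrow> ((\<lambda>s. F (s,y,t)) has_real_derivative d) (at x)"
  "has_partial_derivative 1 F d (x,y,t) \<longleftrightarrow> ((\<lambda>s. F (x,s,t)) has_real_derivative d) (at y)"
  "has_partial_derivative 2 F d (x,y,t) \<longleftrightarrow> ((\<lambda>s. F (x,y,s)) has_real_derivative d) (at t)"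
  by (simp_all add: has_partial_derivative_def upd3_def coord3_def)

lemma pd_eqI: "has_partial_derivative i F d p \<Longrightarrow> pd i F p = d"
  unfolding has_partial_derivative_def pd_def by (rule DERIV_imp_deriv)

lemma has_partial_derivative_transform_open:
  assumes "open U" "p \<in> U" "\<And>r. r \<in> U \<Longrightarrow> F r = G r" "has_partial_derivative i G d p"
  shows "has_partial_derivative i F d p"
proof -
  obtain a b c where p: "p = (a, b, c)"
    by (cases p)
  have "continuous (at s) (upd3 i p)" for s
    unfolding p upd3_def by (cases "i = 0"; cases "i = 1") (simp_all add: continuous_Pair)
  then have "open (upd3 i p -` U)"
    using continuous_open_vimage[OF \<open>open U\<close>] by blast
  moreover have "upd3 i p (coord3 i p) = p"
    unfolding upd3_def coord3_def by (cases p) auto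
  ultimately show ?thesis
    using assms unfolding has_partial_derivative_def
    by (auto intro: has_field_derivative_transform_within_open)
qed

lemma pd_eq_transform_open:
  assumes "open U" "p \<in> U" "\<And>r. r \<in> U \<Longrightarrow> F r = G r" "has_partial_derivative i G d p"
  shows "pd i F p = d"
  using has_partial_derivative_transform_open[OF assms] by (rule pd_eqI)

lemma has_partials_onI:
  assumes "\<And>i p. i < 3 \<Longrightarrow> p \<in> U \<Longrightarrow> has_partial_derivative i F (G i p) p"
  shows "has_partials_on F U"
  using assms unfolding has_partials_on_def has_partial_derivative_def real_differentiable_def
  by blast

lemma C2_onI:
  assumes "open U" "continuous_on U F"
    and G: "\<And>i p. i < 3 \<Longrightarrow> p \<in> U \<Longrightarrow> has_partial_derivative i F (G i p) p"
    and H: "\<And>i j p. i < 3 \<Longrightarrow> j < 3 \<Longrightarrow> p \<in> U \<Longrightarrow> has_partial_derivative j (G i) (H i j p) p"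
    and "\<And>i. i < 3 \<Longrightarrow> continuous_on U (G i)"
    and "\<And>i j. i < 3 \<Longrightarrow> j < 3 \<Longrightarrow> continuous_on U (H i j)"
  shows "C2_on U F"
proof -
  have pd_F: "pd i F p = G i p" if "i < 3" "p \<in> U" for i p
    using G[OF that] by (rule pd_eqI)
  have H': "has_partial_derivative j (pd i F) (H i j p) p" if "i < 3" "j < 3" "p \<in> U" for i j p
    using \<open>open U\<close> that(3) pd_F[OF that(1)] H[OF that] by (rule has_partial_derivative_transform_open)
  show ?thesis
    unfolding C2_on_def
  proof (intro conjI allI impI)
    fix i j :: nat assume "i < 3"
    show "continuous_on U (pd i F)"
      using assms(5)[OF \<open>i < 3\<close>] by (rule continuous_on_eq) (simp add: pd_F \<open>i < 3\<close>)
    show "has_partials_on (pd i F) U"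
      using H' \<open>i < 3\<close> by (blast intro: has_partials_onI)
    assume "j < 3"
    show "continuous_on U (pd j (pd i F))"
      using assms(6)[OF \<open>i < 3\<close> \<open>j < 3\<close>] by (rule continuous_on_eq)
        (simp add: pd_eqI[OF H'] \<open>i < 3\<close> \<open>j < 3\<close>)
  qed (use assms(2) G in \<open>blast intro: has_partials_onI\<close>)+
qed

text \<open>The divergence div_g (grad F / |grad F|_g) of minimal_surface_in, multiplied by lam^2.\<close>

definition scaled_mean_curvature :: "(pt3 \<Rightarrow> real) \<Rightarrow> (pt3 \<Rightarrow> real) \<Rightarrow> pt3 \<Rightarrow> real" where
  "scaled_mean_curvature lam F q =
     (let n = (\<lambda>r. sqrt (((pd 0 F r)\<^sup>2 + (pd 1 F r)\<^sup>2) / (lam r)\<^sup>2 + (pd 2 F r)\<^sup>2))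
      in pd 0 (\<lambda>r. pd 0 F r / n r) q + pd 1 (\<lambda>r. pd 1 F r / n r) q
         + (lam q)\<^sup>2 * pd 2 (\<lambda>r. pd 2 F r / n r) q)"

lemma minimal_surface_in_global_chart:
  assumes "open U" "U \<subseteq> \<Omega>" "C2_on U F" "S = {q \<in> U. F q = 0}"
    and "\<And>q. q \<in> S \<Longrightarrow> \<exists>i<3. pd i F q \<noteq> 0"
    and "\<And>q. q \<in> S \<Longrightarrow> scaled_mean_curvature lam F q = 0"
  shows "minimal_surface_in lam \<Omega> S"
  unfolding minimal_surface_in_def Let_def scaled_mean_curvature_def[unfolded Let_def, symmetric]
  using assms by (auto intro!: exI[of _ U] exI[of _ F])

lemma DERIV_sqrt_compose:
  assumes "(f has_real_derivative D) (at x)" "0 < f x" "E = D / (2 * sqrt (f x))"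
  shows "((\<lambda>s. sqrt (f s)) has_real_derivative E) (at x)"
proof (rule DERIV_cong)
  show "((\<lambda>s. sqrt (f s)) has_real_derivative inverse (sqrt (f x)) / 2 * D) (at x)"
    by (rule DERIV_chain2[where f = sqrt and g = f, OF DERIV_real_sqrt[OF assms(2)] assms(1)])
  show "inverse (sqrt (f x)) / 2 * D = E"
    unfolding assms(3) by (simp add: field_simps)
qed

lemma divide_derivative_eq:
  "(n::real) \<noteq> 0 \<Longrightarrow> (a * n - b * (c / n)) / (n * n) = a / n - b * c / n ^ 3"
  by (simp add: field_simps power3_eq_cube)

section \<open>The height function of the disc\<close>

text \<open>hgt x y is Im (gmap (x + \<i> y)), see gtrans_eq below; being harmonic, its y-y
  derivative is - hgt_xx.\<close>

definition cayley_den :: "real \<Rightarrow> real \<Rightarrow> real" where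
  "cayley_den x y = (1 + x)\<^sup>2 + y\<^sup>2"

definition hgt :: "real \<Rightarrow> real \<Rightarrow> real" where
  "hgt x y = (1 - x\<^sup>2 - y\<^sup>2) / cayley_den x y"

definition hgt_x :: "real \<Rightarrow> real \<Rightarrow> real" where
  "hgt_x x y = -2 * ((1 + x)\<^sup>2 - y\<^sup>2) / (cayley_den x y)\<^sup>2"

definition hgt_y :: "real \<Rightarrow> real \<Rightarrow> real" where
  "hgt_y x y = -4 * y * (1 + x) / (cayley_den x y)\<^sup>2"

definition hgt_xx :: "real \<Rightarrow> real \<Rightarrow> real" where
  "hgt_xx x y = 4 * (1 + x) * ((1 + x)\<^sup>2 - 3 * y\<^sup>2) / (cayley_den x y) ^ 3"

definition hgt_xy :: "real \<Rightarrow> real \<Rightarrow> real" where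
  "hgt_xy x y = 4 * y * (3 * (1 + x)\<^sup>2 - y\<^sup>2) / (cayley_den x y) ^ 3"

lemma cayley_den_pos:
  assumes "x\<^sup>2 + y\<^sup>2 < 1"
  shows "0 < cayley_den x y"
proof -
  have "x\<^sup>2 < 1"
    using assms zero_le_power2[of y] by linarith
  then have "\<bar>x\<bar> < 1"
    by (simp add: abs_square_less_1)
  then show ?thesis
    unfolding cayley_den_def by (simp add: add_pos_nonneg)
qed

lemma hgt_pos: "x\<^sup>2 + y\<^sup>2 < 1 \<Longrightarrow> 0 < hgt x y"
  using cayley_den_pos[of x y] unfolding hgt_def by simp

lemma cayley_den_nonzero_if_hgt: "hgt x y \<noteq> 0 \<Longrightarrow> cayley_den x y \<noteq> 0"
  unfolding hgt_def by auto

lemma DERIV_cayley_den_dx: "((\<lambda>s. cayley_den s y) has_real_derivative 2 * (1 + x)) (at x)"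
  unfolding cayley_den_def by (auto intro!: derivative_eq_intros)

lemma DERIV_cayley_den_dy: "((\<lambda>s. cayley_den x s) has_real_derivative 2 * y) (at y)"
  unfolding cayley_den_def by (auto intro!: derivative_eq_intros)

context
  fixes x y :: real
  assumes den: "cayley_den x y \<noteq> 0"
begin

lemma DERIV_hgt_dx: "((\<lambda>s. hgt s y) has_real_derivative hgt_x x y) (at x)"
  unfolding hgt_def hgt_x_def
  using den by (auto intro!: derivative_eq_intros DERIV_cayley_den_dx DERIV_cayley_den_dy
    simp: divide_simps) (simp add: cayley_den_def, algebra)

lemma DERIV_hgt_dy: "((\<lambda>s. hgt x s) has_real_derivative hgt_y x y) (at y)"
  unfolding hgt_def hgt_y_def
  using den by (auto intro!: derivative_eq_intros DERIV_cayley_den_dx DERIV_cayley_den_dy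
    simp: divide_simps) (simp add: cayley_den_def, algebra)

lemma DERIV_hgt_x_dx: "((\<lambda>s. hgt_x s y) has_real_derivative hgt_xx x y) (at x)"
  unfolding hgt_x_def hgt_xx_def
  using den by (auto intro!: derivative_eq_intros DERIV_cayley_den_dx DERIV_cayley_den_dy
    simp: divide_simps) (simp add: cayley_den_def, algebra)

lemma DERIV_hgt_x_dy: "((\<lambda>s. hgt_x x s) has_real_derivative hgt_xy x y) (at y)"
  unfolding hgt_x_def hgt_xy_def
  using den by (auto intro!: derivative_eq_intros DERIV_cayley_den_dx DERIV_cayley_den_dy
    simp: divide_simps) (simp add: cayley_den_def, algebra)

lemma DERIV_hgt_y_dx: "((\<lambda>s. hgt_y s y) has_real_derivative hgt_xy x y) (at x)"
  unfolding hgt_y_def hgt_xy_def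
  using den by (auto intro!: derivative_eq_intros DERIV_cayley_den_dx DERIV_cayley_den_dy
    simp: divide_simps) (simp add: cayley_den_def, algebra)

lemma DERIV_hgt_y_dy: "((\<lambda>s. hgt_y x s) has_real_derivative - hgt_xx x y) (at y)"
  unfolding hgt_y_def hgt_xx_def
  using den by (auto intro!: derivative_eq_intros DERIV_cayley_den_dx DERIV_cayley_den_dy
    simp: divide_simps) (simp add: cayley_den_def, algebra)

lemma hgt_grad_sq: "(hgt_x x y)\<^sup>2 + (hgt_y x y)\<^sup>2 = 4 / (cayley_den x y)\<^sup>2"
  unfolding hgt_x_def hgt_y_def
  by (simp add: divide_simps den, simp add: cayley_den_def, algebra)

end

lemma hgt_grad_sq_lamD:
  assumes "x\<^sup>2 + y\<^sup>2 < 1"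
  shows "(hgt_x x y)\<^sup>2 + (hgt_y x y)\<^sup>2 = (lamD (x,y,t))\<^sup>2 * (hgt x y)\<^sup>2"
proof -
  have "1 - x\<^sup>2 - y\<^sup>2 \<noteq> 0" "cayley_den x y \<noteq> 0"
    using cayley_den_pos[OF assms] assms by auto
  then show ?thesis
    by (simp add: hgt_grad_sq lamD_def hgt_def field_simps)
qed

section \<open>The defining function of the catenoids\<close>

definition cos_pos_interval :: "int \<Rightarrow> real set" where
  "cos_pos_interval k = {2 * pi * real_of_int k - pi / 2 <..< 2 * pi * real_of_int k + pi / 2}"

lemma cos_minus_2pi_int: "cos (t - 2 * pi * real_of_int k) = cos t"
  by (simp add: cos_diff)

lemma cos_cos_pos_interval_endpoints:
  "cos (2 * pi * real_of_int k - pi / 2) = 0" "cos (2 * pi * real_of_int k + pi / 2) = 0"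
  by (simp_all add: cos_diff cos_add)

lemma cos_pos_iff_cos_pos_interval: "0 < cos t \<longleftrightarrow> (\<exists>k. t \<in> cos_pos_interval k)"
proof
  assume "\<exists>k. t \<in> cos_pos_interval k"
  then obtain k where "t \<in> cos_pos_interval k" ..
  then have "0 < cos (t - 2 * pi * real_of_int k)"
    unfolding cos_pos_interval_def by (intro cos_gt_zero_pi) auto
  then show "0 < cos t"
    by (simp add: cos_minus_2pi_int)
next
  assume pos: "0 < cos t"
  define k where "k = \<lfloor>(t + pi / 2) / (2 * pi)\<rfloor>"
  define r where "r = t - 2 * pi * real_of_int k"
  have "real_of_int k \<le> (t + pi / 2) / (2 * pi)" "(t + pi / 2) / (2 * pi) < real_of_int k + 1"
    unfolding k_def by linarith+
  then have r: "- (pi / 2) \<le> r" "r < 3 * pi / 2"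
    using pi_gt_zero unfolding r_def by (simp_all add: field_simps)
  have cos_r: "0 < cos r"
    unfolding r_def cos_minus_2pi_int using pos .
  have "\<not> pi / 2 \<le> r"
  proof
    assume "pi / 2 \<le> r"
    then have "0 \<le> cos (r - pi)"
      using r by (intro cos_ge_zero) auto
    then show False
      using cos_r by (simp add: cos_diff)
  qed
  moreover have "r \<noteq> - (pi / 2)"
    using cos_r by auto
  ultimately have "t \<in> cos_pos_interval k"
    using r unfolding r_def cos_pos_interval_def by auto
  then show "\<exists>k. t \<in> cos_pos_interval k" ..
qed

lemma connected_subset_cos_pos_interval:
  assumes "connected T" "\<And>s. s \<in> T \<Longrightarrow> 0 < cos s" "t0 \<in> T" "t0 \<in> cos_pos_interval k"
  shows "T \<subseteq> cos_pos_interval k"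
proof
  fix t1 assume "t1 \<in> T"
  let ?a = "2 * pi * real_of_int k - pi / 2" and ?b = "2 * pi * real_of_int k + pi / 2"
  have "?a \<notin> T" "?b \<notin> T"
    using assms(2) cos_cos_pos_interval_endpoints by force+
  moreover have "{t0..t1} \<subseteq> T" "{t1..t0} \<subseteq> T"
    using connected_contains_Icc[OF assms(1)] assms(3) \<open>t1 \<in> T\<close> by auto
  moreover have "?a < t0" "t0 < ?b"
    using assms(4) unfolding cos_pos_interval_def by auto
  ultimately have "\<not> t1 \<le> ?a" "\<not> ?b \<le> t1"
    by (meson atLeastAtMost_iff less_imp_le subsetD)+
  then show "t1 \<in> cos_pos_interval k"
    unfolding cos_pos_interval_def by simp
qed

definition slab :: "int \<Rightarrow> pt3 set" where
  "slab k = {p. (fst p)\<^sup>2 + (fst (snd p))\<^sup>2 < 1 \<and> snd (snd p) \<in> cos_pos_interval k}"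

definition cat_fun :: "pt3 \<Rightarrow> real" where
  "cat_fun p = hgt (fst p) (fst (snd p)) - cos (snd (snd p))"

definition cat_grad :: "nat \<Rightarrow> pt3 \<Rightarrow> real" where
  "cat_grad i p = [hgt_x (fst p) (fst (snd p)), hgt_y (fst p) (fst (snd p)), sin (snd (snd p))] ! i"

definition cat_hess :: "nat \<Rightarrow> nat \<Rightarrow> pt3 \<Rightarrow> real" where
  "cat_hess i j p = (let x = fst p; y = fst (snd p); t = snd (snd p) in
     [[hgt_xx x y, hgt_xy x y, 0], [hgt_xy x y, - hgt_xx x y, 0], [0, 0, cos t]] ! i ! j)"

lemma cat_grad_simps:
  "cat_grad 0 p = hgt_x (fst p) (fst (snd p))"
  "cat_grad 1 p = hgt_y (fst p) (fst (snd p))"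
  "cat_grad 2 p = sin (snd (snd p))"
  by (simp_all add: cat_grad_def)

lemma open_slab: "open (slab k)"
  unfolding slab_def cos_pos_interval_def greaterThanLessThan_iff
  by (intro open_Collect_conj open_Collect_less continuous_intros)

lemma less_3_cases: "(i::nat) < 3 \<Longrightarrow> i = 0 \<or> i = 1 \<or> i = 2"
  by auto

lemma has_partial_derivative_cat_fun:
  assumes "cayley_den x y \<noteq> 0" "i < 3"
  shows "has_partial_derivative i cat_fun (cat_grad i (x,y,t)) (x,y,t)"
  using less_3_cases[OF assms(2)] unfolding cat_fun_def cat_grad_def
  by (auto simp: has_partial_derivative_coords has_partial_derivative_coords(2)[unfolded One_nat_def]
      intro!: derivative_eq_intros
      DERIV_hgt_dx[OF assms(1)] DERIV_hgt_dy[OF assms(1)])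

lemma has_partial_derivative_cat_grad:
  assumes "cayley_den x y \<noteq> 0" "i < 3" "j < 3"
  shows "has_partial_derivative j (cat_grad i) (cat_hess i j (x,y,t)) (x,y,t)"
  using less_3_cases[OF assms(2)] less_3_cases[OF assms(3)] assms(1)
  unfolding cat_grad_def cat_hess_def
  by (auto simp: has_partial_derivative_coords has_partial_derivative_coords(2)[unfolded One_nat_def]
      intro!: derivative_eq_intros
      DERIV_hgt_x_dx DERIV_hgt_x_dy DERIV_hgt_y_dx DERIV_hgt_y_dy)

lemma cayley_den_nonzero_on_slab: "p \<in> slab k \<Longrightarrow> cayley_den (fst p) (fst (snd p)) \<noteq> 0"
  unfolding slab_def using cayley_den_pos by force

lemma continuous_on_slab_hgt:
  "continuous_on (slab k) (\<lambda>p. hgt (fst p) (fst (snd p)))"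
  "continuous_on (slab k) (\<lambda>p. hgt_x (fst p) (fst (snd p)))"
  "continuous_on (slab k) (\<lambda>p. hgt_y (fst p) (fst (snd p)))"
  "continuous_on (slab k) (\<lambda>p. hgt_xx (fst p) (fst (snd p)))"
  "continuous_on (slab k) (\<lambda>p. hgt_xy (fst p) (fst (snd p)))"
proof -
  have "\<forall>p\<in>slab k. (1 + fst p)\<^sup>2 + (fst (snd p))\<^sup>2 \<noteq> 0"
    using cayley_den_nonzero_on_slab unfolding cayley_den_def by blast
  then show
    "continuous_on (slab k) (\<lambda>p. hgt (fst p) (fst (snd p)))"
    "continuous_on (slab k) (\<lambda>p. hgt_x (fst p) (fst (snd p)))"
    "continuous_on (slab k) (\<lambda>p. hgt_y (fst p) (fst (snd p)))"
    "continuous_on (slab k) (\<lambda>p. hgt_xx (fst p) (fst (snd p)))"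
    "continuous_on (slab k) (\<lambda>p. hgt_xy (fst p) (fst (snd p)))"
    unfolding hgt_def hgt_x_def hgt_y_def hgt_xx_def hgt_xy_def cayley_den_def
    by (intro continuous_intros; simp)+
qed

lemma C2_on_slab_cat_fun: "C2_on (slab k) cat_fun"
proof (rule C2_onI[where G = cat_grad and H = cat_hess])
  show "continuous_on (slab k) cat_fun"
    unfolding cat_fun_def by (intro continuous_intros continuous_on_slab_hgt)
  fix i j :: nat and p assume ij: "i < 3" "j < 3" and p: "p \<in> slab k"
  show "has_partial_derivative i cat_fun (cat_grad i p) p"
    using has_partial_derivative_cat_fun[OF cayley_den_nonzero_on_slab[OF p] ij(1), of "snd (snd p)"]
    by simp
  show "has_partial_derivative j (cat_grad i) (cat_hess i j p) p"
    using has_partial_derivative_cat_grad[OF cayley_den_nonzero_on_slab[OF p] ij, of "snd (snd p)"]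
    by simp
next
  fix i j :: nat assume ij: "i < 3" "j < 3"
  show "continuous_on (slab k) (cat_grad i)"
    using less_3_cases[OF ij(1)] unfolding cat_grad_def
    by (auto simp: continuous_on_slab_hgt intro!: continuous_on_sin continuous_on_cos
        continuous_on_minus continuous_on_snd continuous_on_id)
  show "continuous_on (slab k) (cat_hess i j)"
    using less_3_cases[OF ij(1)] less_3_cases[OF ij(2)] unfolding cat_hess_def Let_def
    by (auto simp: continuous_on_slab_hgt intro!: continuous_on_sin continuous_on_cos
        continuous_on_minus continuous_on_snd continuous_on_id)
qed (rule open_slab)

section \<open>Minimality and properness\<close>

definition cat_norm :: "pt3 \<Rightarrow> real" where
  "cat_norm p = sqrt ((hgt (fst p) (fst (snd p)))\<^sup>2 + (sin (snd (snd p)))\<^sup>2)"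

lemma pd_cat_fun_slab: "p \<in> slab k \<Longrightarrow> i < 3 \<Longrightarrow> pd i cat_fun p = cat_grad i p"
  using has_partial_derivative_cat_fun[OF cayley_den_nonzero_on_slab, of p k i "snd (snd p)"]
  by (simp add: pd_eqI)

lemma metric_norm_grad_cat_fun:
  assumes "p \<in> slab k"
  shows "sqrt (((pd 0 cat_fun p)\<^sup>2 + (pd 1 cat_fun p)\<^sup>2) / (lamD p)\<^sup>2 + (pd 2 cat_fun p)\<^sup>2)
    = cat_norm p"
proof -
  obtain x y t where p: "p = (x, y, t)"
    by (cases p)
  have "x\<^sup>2 + y\<^sup>2 < 1"
    using assms unfolding p slab_def by simp
  then have "((hgt_x x y)\<^sup>2 + (hgt_y x y)\<^sup>2) / (lamD p)\<^sup>2 = (hgt x y)\<^sup>2"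
    unfolding p using hgt_grad_sq_lamD[of x y t] by (simp add: lamD_def)
  then show ?thesis
    using assms by (simp add: pd_cat_fun_slab cat_grad_def cat_norm_def p)
qed

context
  fixes x y t :: real
  assumes hgt: "hgt x y \<noteq> 0"
begin

lemma cat_norm_pos: "0 < cat_norm (x, y, t)"
  using hgt unfolding cat_norm_def by (simp add: add_pos_nonneg)

lemma has_partial_derivative_cat_norm:
  "has_partial_derivative 0 cat_norm (hgt x y * hgt_x x y / cat_norm (x, y, t)) (x, y, t)"
  "has_partial_derivative 1 cat_norm (hgt x y * hgt_y x y / cat_norm (x, y, t)) (x, y, t)"
  "has_partial_derivative 2 cat_norm (sin t * cos t / cat_norm (x, y, t)) (x, y, t)"
proof -
  have pos: "0 < (hgt x y)\<^sup>2 + (sin t)\<^sup>2"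
    using hgt by (simp add: add_pos_nonneg)
  note den = cayley_den_nonzero_if_hgt[OF hgt]
  have "((\<lambda>s. (hgt s y)\<^sup>2 + (sin t)\<^sup>2) has_real_derivative 2 * hgt x y * hgt_x x y) (at x)"
    by (auto intro!: derivative_eq_intros DERIV_hgt_dx[OF den])
  moreover have "((\<lambda>s. (hgt x s)\<^sup>2 + (sin t)\<^sup>2) has_real_derivative 2 * hgt x y * hgt_y x y) (at y)"
    by (auto intro!: derivative_eq_intros DERIV_hgt_dy[OF den])
  moreover have "((\<lambda>s. (hgt x y)\<^sup>2 + (sin s)\<^sup>2) has_real_derivative 2 * sin t * cos t) (at t)"
    by (auto intro!: derivative_eq_intros)
  ultimately show
    "has_partial_derivative 0 cat_norm (hgt x y * hgt_x x y / cat_norm (x, y, t)) (x, y, t)"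
    "has_partial_derivative 1 cat_norm (hgt x y * hgt_y x y / cat_norm (x, y, t)) (x, y, t)"
    "has_partial_derivative 2 cat_norm (sin t * cos t / cat_norm (x, y, t)) (x, y, t)"
    unfolding has_partial_derivative_coords cat_norm_def fst_conv snd_conv
    by (auto intro: DERIV_sqrt_compose simp: pos)
qed

lemma has_partial_derivative_cat_unit_normal:
  shows "has_partial_derivative 0 (\<lambda>r. cat_grad 0 r / cat_norm r)
      (hgt_xx x y / cat_norm (x, y, t) - hgt x y * (hgt_x x y)\<^sup>2 / cat_norm (x, y, t) ^ 3) (x, y, t)"
    "has_partial_derivative 1 (\<lambda>r. cat_grad 1 r / cat_norm r)
      (- hgt_xx x y / cat_norm (x, y, t) - hgt x y * (hgt_y x y)\<^sup>2 / cat_norm (x, y, t) ^ 3) (x, y, t)"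
    "has_partial_derivative 2 (\<lambda>r. cat_grad 2 r / cat_norm r)
      (cos t / cat_norm (x, y, t) - (sin t)\<^sup>2 * cos t / cat_norm (x, y, t) ^ 3) (x, y, t)"
proof -
  have n: "cat_norm (x, y, t) \<noteq> 0"
    using cat_norm_pos by simp
  note den = cayley_den_nonzero_if_hgt[OF hgt]
  note dn = has_partial_derivative_cat_norm[unfolded has_partial_derivative_coords]
  note quotient = divide_derivative_eq[OF n] mult_ac power2_eq_square
  show "has_partial_derivative 0 (\<lambda>r. cat_grad 0 r / cat_norm r)
      (hgt_xx x y / cat_norm (x, y, t) - hgt x y * (hgt_x x y)\<^sup>2 / cat_norm (x, y, t) ^ 3) (x, y, t)"
    unfolding has_partial_derivative_coords cat_grad_simps fst_conv snd_conv
    by (rule derivative_eq_intros DERIV_hgt_x_dx[OF den] dn(1) n refl)+ (subst quotient(1), simp add: quotient(2-))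
  show "has_partial_derivative 1 (\<lambda>r. cat_grad 1 r / cat_norm r)
      (- hgt_xx x y / cat_norm (x, y, t) - hgt x y * (hgt_y x y)\<^sup>2 / cat_norm (x, y, t) ^ 3) (x, y, t)"
    unfolding has_partial_derivative_coords cat_grad_simps fst_conv snd_conv
    by (rule derivative_eq_intros DERIV_hgt_y_dy[OF den] dn(2) n refl)+ (subst quotient(1), simp add: quotient(2-))
  show "has_partial_derivative 2 (\<lambda>r. cat_grad 2 r / cat_norm r)
      (cos t / cat_norm (x, y, t) - (sin t)\<^sup>2 * cos t / cat_norm (x, y, t) ^ 3) (x, y, t)"
    unfolding has_partial_derivative_coords cat_grad_simps fst_conv snd_conv
    by (rule derivative_eq_intros dn(3) n refl)+ (subst quotient(1), simp add: quotient(2-))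
qed

end

lemma Qk_eq_slab_zero_set: "Qk k = {p \<in> slab k. cat_fun p = 0}"
proof -
  have "p \<in> Qk k \<longleftrightarrow> p \<in> slab k \<and> cat_fun p = 0" for p
  proof -
    obtain x y t where p: "p = (x, y, t)"
      by (cases p)
    have "cat_fun p = 0 \<longleftrightarrow> 1 - x\<^sup>2 - y\<^sup>2 = cos t * ((1 + x)\<^sup>2 + y\<^sup>2)" if "x\<^sup>2 + y\<^sup>2 < 1"
      using cayley_den_pos[OF that]
      unfolding p cat_fun_def hgt_def cayley_den_def by (auto simp: divide_eq_eq)
    then show ?thesis
      unfolding p Qk_def slab_def cos_pos_interval_def by auto
  qed
  then show ?thesis
    by blast
qed

lemma scaled_mean_curvature_cat_fun:
  assumes "q \<in> Qk k"
  shows "scaled_mean_curvature lamD cat_fun q = 0"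
proof -
  obtain x y t where q: "q = (x, y, t)"
    by (cases q)
  have slab: "q \<in> slab k" and cos: "cos t = hgt x y"
    using assms unfolding Qk_eq_slab_zero_set q cat_fun_def by auto
  then have disc: "x\<^sup>2 + y\<^sup>2 < 1"
    unfolding q slab_def by simp
  then have hgt: "hgt x y \<noteq> 0"
    using hgt_pos by fastforce
  define n where "n = cat_norm (x, y, t)"
  have "n \<noteq> 0"
    using cat_norm_pos[OF hgt, of t] unfolding n_def by simp
  have n_sq: "n\<^sup>2 = (hgt x y)\<^sup>2 + (sin t)\<^sup>2"
    unfolding n_def cat_norm_def by simp
  define N where "N r = sqrt (((pd 0 cat_fun r)\<^sup>2 + (pd 1 cat_fun r)\<^sup>2) / (lamD r)\<^sup>2
      + (pd 2 cat_fun r)\<^sup>2)" for r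
  have "N r = cat_norm r" if "r \<in> slab k" for r
    unfolding N_def using that by (rule metric_norm_grad_cat_fun)
  then have unit_normal: "pd i cat_fun r / N r = cat_grad i r / cat_norm r"
    if "i < 3" "r \<in> slab k" for i r
    using that by (simp add: pd_cat_fun_slab)
  have div: "pd i (\<lambda>r. pd i cat_fun r / N r) q = d"
    if "i < 3" "has_partial_derivative i (\<lambda>r. cat_grad i r / cat_norm r) d q" for i d
    using open_slab slab unit_normal[OF that(1)] that(2) by (rule pd_eq_transform_open)
  note derivs = has_partial_derivative_cat_unit_normal[OF hgt, of t, folded n_def q]
  have "scaled_mean_curvature lamD cat_fun q
      = (hgt_xx x y / n - hgt x y * (hgt_x x y)\<^sup>2 / n ^ 3)
        + (- hgt_xx x y / n - hgt x y * (hgt_y x y)\<^sup>2 / n ^ 3)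
        + (lamD q)\<^sup>2 * (cos t / n - (sin t)\<^sup>2 * cos t / n ^ 3)"
    unfolding scaled_mean_curvature_def Let_def N_def[symmetric]
    using div[OF _ derivs(1)] div[OF _ derivs(2)] div[OF _ derivs(3)] by simp
  also have "\<dots> = ((lamD q)\<^sup>2 * cos t * (n\<^sup>2 - (sin t)\<^sup>2)
      - hgt x y * ((hgt_x x y)\<^sup>2 + (hgt_y x y)\<^sup>2)) / n ^ 3"
    using \<open>n \<noteq> 0\<close> by (simp add: field_simps power2_eq_square power3_eq_cube)
  also have "\<dots> = 0"
    unfolding n_sq cos hgt_grad_sq_lamD[OF disc, of t] q[symmetric] by (simp add: algebra_simps)
  finally show ?thesis .
qed

lemma pd_cat_fun_nonzero:
  assumes "q \<in> slab k"
  shows "\<exists>i<3. pd i cat_fun q \<noteq> 0"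
proof -
  have den: "cayley_den (fst q) (fst (snd q)) \<noteq> 0"
    using cayley_den_nonzero_on_slab[OF assms] .
  then have "(hgt_x (fst q) (fst (snd q)))\<^sup>2 + (hgt_y (fst q) (fst (snd q)))\<^sup>2 \<noteq> 0"
    by (simp add: hgt_grad_sq)
  then have "cat_grad 0 q \<noteq> 0 \<or> cat_grad 1 q \<noteq> 0"
    unfolding cat_grad_simps by auto
  moreover have "(0::nat) < 3" "(1::nat) < 3"
    by simp_all
  ultimately show ?thesis
    using pd_cat_fun_slab[OF assms] by metis
qed

lemma minimal_surface_in_Qk: "minimal_surface_in lamD DR (Qk k)"
proof (rule minimal_surface_in_global_chart[OF open_slab _ C2_on_slab_cat_fun Qk_eq_slab_zero_set])
  show "slab k \<subseteq> DR"
    unfolding slab_def DR_def by auto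
  fix q assume q: "q \<in> Qk k"
  then show "\<exists>i<3. pd i cat_fun q \<noteq> 0"
    using pd_cat_fun_nonzero unfolding Qk_eq_slab_zero_set by blast
  show "scaled_mean_curvature lamD cat_fun q = 0"
    using q by (rule scaled_mean_curvature_cat_fun)
qed

lemma closedin_Qk: "closedin (top_of_set DR) (Qk k)"
proof -
  define C where "C = {p::pt3. 1 - (fst p)\<^sup>2 - (fst (snd p))\<^sup>2
      = cos (snd (snd p)) * ((1 + fst p)\<^sup>2 + (fst (snd p))\<^sup>2)
    \<and> 2 * pi * real_of_int k - pi / 2 \<le> snd (snd p) \<and> snd (snd p) \<le> 2 * pi * real_of_int k + pi / 2}"
  have "closed C"
    unfolding C_def by (intro closed_Collect_conj closed_Collect_eq closed_Collect_le continuous_intros)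
  have "p \<in> Qk k \<longleftrightarrow> p \<in> DR \<inter> C" for p
  proof -
    obtain x y t where p: "p = (x, y, t)"
      by (cases p)
    have "cos t \<noteq> 0" if "x\<^sup>2 + y\<^sup>2 < 1" "1 - x\<^sup>2 - y\<^sup>2 = cos t * ((1 + x)\<^sup>2 + y\<^sup>2)"
    proof
      assume "cos t = 0"
      with that show False
        by simp
    qed
    then have "t \<noteq> 2 * pi * real_of_int k - pi / 2 \<and> t \<noteq> 2 * pi * real_of_int k + pi / 2"
      if "x\<^sup>2 + y\<^sup>2 < 1" "1 - x\<^sup>2 - y\<^sup>2 = cos t * ((1 + x)\<^sup>2 + y\<^sup>2)"
      using that cos_cos_pos_interval_endpoints[of k] by metis
    then show ?thesis
      unfolding p Qk_def DR_def C_def by auto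
  qed
  then have "Qk k = DR \<inter> C"
    by blast
  then show ?thesis
    using closedin_closed_Int[OF \<open>closed C\<close>] by simp
qed

section \<open>The components\<close>

lemma components_eqI:
  assumes "S = (\<Union>k. Q k)" "\<And>k. Q k \<noteq> {}" "\<And>k. connected (Q k)"
    and "\<And>C k. connected C \<Longrightarrow> C \<subseteq> S \<Longrightarrow> C \<inter> Q k \<noteq> {} \<Longrightarrow> C \<subseteq> Q k"
  shows "components S = range Q"
proof
  show "range Q \<subseteq> components S"
  proof clarify
    fix k
    have "D = Q k" if "Q k \<subseteq> D" "D \<subseteq> S" "connected D" for D
      using assms(2) assms(4)[of D k] that by (simp add: Int_absorb1 subset_antisym)
    then show "Q k \<in> components S"
      unfolding in_components_maximal using assms(1-3) by blast
  qed
  show "components S \<subseteq> range Q"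
  proof
    fix C assume C: "C \<in> components S"
    obtain p where "p \<in> C"
      using in_components_nonempty[OF C] by blast
    then obtain k where "p \<in> Q k"
      using in_components_subset[OF C] assms(1) by blast
    have "C \<subseteq> Q k"
      using assms(4)[OF in_components_connected[OF C] in_components_subset[OF C]] \<open>p \<in> C\<close> \<open>p \<in> Q k\<close>
      by blast
    moreover have "Q k \<subseteq> C"
      using components_maximal[OF C assms(3)] assms(1) \<open>p \<in> C\<close> \<open>p \<in> Q k\<close> by blast
    ultimately have "C = Q k"
      by (rule subset_antisym)
    then show "C \<in> range Q"
      by simp
  qed
qed

lemma Qset_disc_eq_Union_Qk: "Qset \<inter> {(x, y, t). x\<^sup>2 + y\<^sup>2 < 1} = (\<Union>k. Qk k)"
proof -
  have "0 < cos t" if "x\<^sup>2 + y\<^sup>2 < 1" "1 - x\<^sup>2 - y\<^sup>2 = cos t * cayley_den x y" for x y t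
  proof -
    have "0 < cos t * cayley_den x y"
      unfolding that(2)[symmetric] using that(1) by linarith
    then show ?thesis
      using cayley_den_pos[OF that(1)] by (simp add: zero_less_mult_iff)
  qed
  then show ?thesis
    unfolding Qset_def Qk_def cayley_den_def
    using cos_pos_iff_cos_pos_interval unfolding cos_pos_interval_def by fastforce
qed

lemma connected_subset_Qk:
  assumes "connected C" "C \<subseteq> (\<Union>k. Qk k)" "C \<inter> Qk k \<noteq> {}"
  shows "C \<subseteq> Qk k"
proof -
  have in_interval: "snd (snd p) \<in> cos_pos_interval j" if "p \<in> Qk j" for p j
    using that unfolding Qk_def cos_pos_interval_def by auto
  obtain p where "p \<in> C" "p \<in> Qk k"
    using assms(3) by blast
  have "(\<lambda>p. snd (snd p)) ` C \<subseteq> cos_pos_interval k"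
  proof (rule connected_subset_cos_pos_interval)
    show "connected ((\<lambda>p. snd (snd p)) ` C)"
      using assms(1) by (intro connected_continuous_image continuous_intros)
    show "0 < cos s" if "s \<in> (\<lambda>p. snd (snd p)) ` C" for s
      using that assms(2) in_interval cos_pos_iff_cos_pos_interval by blast
    show "snd (snd p) \<in> (\<lambda>p. snd (snd p)) ` C"
      using \<open>p \<in> C\<close> by blast
    show "snd (snd p) \<in> cos_pos_interval k"
      using \<open>p \<in> Qk k\<close> by (rule in_interval)
  qed
  then show ?thesis
    using assms(2) unfolding Qk_def cos_pos_interval_def by fastforce
qed

section \<open>Congruence to the parabolic catenoid\<close>

lemma gtrans_eq: "gtrans c (x, y, t) = (2 * y / cayley_den x y, hgt x y, t + c)"
  unfolding gtrans_def gmap_def hgt_def cayley_den_def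
  by (simp add: Re_divide Im_divide power2_eq_square field_simps)

text \<open>(inv_cayley_x u v, inv_cayley_y u v) is the inverse image under gmap of u + \<i> v,
  namely (\<i> - w) / (\<i> + w) for w = u + \<i> v.\<close>

definition inv_cayley_x :: "real \<Rightarrow> real \<Rightarrow> real" where
  "inv_cayley_x u v = (1 - u\<^sup>2 - v\<^sup>2) / (u\<^sup>2 + (1 + v)\<^sup>2)"

definition inv_cayley_y :: "real \<Rightarrow> real \<Rightarrow> real" where
  "inv_cayley_y u v = 2 * u / (u\<^sup>2 + (1 + v)\<^sup>2)"

lemma inv_cayley_identities:
  assumes "0 < v"
  shows "1 - (inv_cayley_x u v)\<^sup>2 - (inv_cayley_y u v)\<^sup>2 = 4 * v / (u\<^sup>2 + (1 + v)\<^sup>2)"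
    and "(1 + inv_cayley_x u v)\<^sup>2 + (inv_cayley_y u v)\<^sup>2 = 4 / (u\<^sup>2 + (1 + v)\<^sup>2)"
proof -
  have "u\<^sup>2 + (1 + v)\<^sup>2 \<noteq> 0"
    using assms by (simp add: add_nonneg_pos)
  then show "1 - (inv_cayley_x u v)\<^sup>2 - (inv_cayley_y u v)\<^sup>2 = 4 * v / (u\<^sup>2 + (1 + v)\<^sup>2)"
    and "(1 + inv_cayley_x u v)\<^sup>2 + (inv_cayley_y u v)\<^sup>2 = 4 / (u\<^sup>2 + (1 + v)\<^sup>2)"
    unfolding inv_cayley_x_def inv_cayley_y_def by (simp add: divide_simps, algebra)+
qed

lemma inv_cayley_of_cayley:
  assumes "0 < cayley_den x y"
  shows "inv_cayley_x (2 * y / cayley_den x y) (hgt x y) = x"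
    and "inv_cayley_y (2 * y / cayley_den x y) (hgt x y) = y"
proof -
  define D where "D = cayley_den x y"
  have "D \<noteq> 0"
    using assms unfolding D_def by simp
  note D_simps = D_def cayley_den_def power2_eq_square algebra_simps
  have norm: "(2 * y / D)\<^sup>2 + (1 + hgt x y)\<^sup>2 = 4 / D"
    using \<open>D \<noteq> 0\<close> unfolding hgt_def D_def[symmetric]
    by (simp add: divide_simps) (simp add: D_simps)
  show "inv_cayley_x (2 * y / cayley_den x y) (hgt x y) = x"
    unfolding inv_cayley_x_def D_def[symmetric] norm unfolding hgt_def D_def[symmetric]
    using \<open>D \<noteq> 0\<close> by (simp add: divide_simps) (simp add: D_simps)
  show "inv_cayley_y (2 * y / cayley_den x y) (hgt x y) = y"
    unfolding inv_cayley_y_def D_def[symmetric] norm using \<open>D \<noteq> 0\<close> by simp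
qed

definition cat_shift :: "int \<Rightarrow> real" where
  "cat_shift k = pi / 2 - 2 * pi * real_of_int k"

definition cat_chart :: "int \<Rightarrow> real \<times> real \<Rightarrow> pt3" where
  "cat_chart k q = (inv_cayley_x (fst q) (sin (snd q)), inv_cayley_y (fst q) (sin (snd q)),
     snd q - cat_shift k)"

lemma cos_minus_cat_shift: "cos (s - cat_shift k) = sin s"
proof -
  have shift: "s - cat_shift k = (s - pi / 2) + 2 * pi * real_of_int k"
    unfolding cat_shift_def by simp
  show ?thesis
    unfolding shift by (simp add: cos_add cos_diff)
qed

lemma sin_plus_cat_shift: "sin (t + cat_shift k) = cos t"
proof -
  have shift: "t + cat_shift k = (t - 2 * pi * real_of_int k) + pi / 2"
    unfolding cat_shift_def by simp
  show ?thesis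
    unfolding shift by (simp add: sin_add cos_minus_2pi_int)
qed

lemma cat_chart_in_Qk_and_gtrans:
  assumes "0 < s" "s < pi"
  shows "cat_chart k (u, s) \<in> Qk k" "gtrans (cat_shift k) (cat_chart k (u, s)) = Psi1 (u, s)"
proof -
  define X Y E where "X = inv_cayley_x u (sin s)" "Y = inv_cayley_y u (sin s)"
    "E = u\<^sup>2 + (1 + sin s)\<^sup>2"
  have "0 < sin s"
    using assms by (simp add: sin_gt_zero)
  then have "0 < E"
    unfolding X_Y_E_def by (simp add: add_nonneg_pos)
  have disc: "1 - X\<^sup>2 - Y\<^sup>2 = 4 * sin s / E" and den: "cayley_den X Y = 4 / E"
    using inv_cayley_identities[OF \<open>0 < sin s\<close>, of u] unfolding X_Y_E_def cayley_den_def by auto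
  have chart: "cat_chart k (u, s) = (X, Y, s - cat_shift k)"
    unfolding cat_chart_def X_Y_E_def by simp
  have "X\<^sup>2 + Y\<^sup>2 < 1"
    using disc \<open>0 < E\<close> \<open>0 < sin s\<close> divide_pos_pos[of "4 * sin s" E] by linarith
  moreover have "1 - X\<^sup>2 - Y\<^sup>2 = cos (s - cat_shift k) * ((1 + X)\<^sup>2 + Y\<^sup>2)"
    using den unfolding disc cos_minus_cat_shift cayley_den_def by simp
  moreover have "s - cat_shift k \<in> cos_pos_interval k"
    using assms unfolding cat_shift_def cos_pos_interval_def by auto
  ultimately show "cat_chart k (u, s) \<in> Qk k"
    unfolding chart Qk_def cos_pos_interval_def by auto
  have "2 * Y / cayley_den X Y = u"
    using \<open>0 < E\<close> unfolding den unfolding X_Y_E_def inv_cayley_y_def by simp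
  moreover have "hgt X Y = sin s"
    using \<open>0 < E\<close> unfolding hgt_def den disc by simp
  ultimately show "gtrans (cat_shift k) (cat_chart k (u, s)) = Psi1 (u, s)"
    unfolding chart gtrans_eq Psi1_def by simp
qed

lemma Qk_eq_cat_chart_image: "Qk k = cat_chart k ` (UNIV \<times> {0<..<pi})"
proof
  show "cat_chart k ` (UNIV \<times> {0<..<pi}) \<subseteq> Qk k"
    using cat_chart_in_Qk_and_gtrans(1) by auto
  show "Qk k \<subseteq> cat_chart k ` (UNIV \<times> {0<..<pi})"
  proof
    fix p assume "p \<in> Qk k"
    obtain x y t where p: "p = (x, y, t)"
      by (cases p)
    have disc: "x\<^sup>2 + y\<^sup>2 < 1" and eq: "1 - x\<^sup>2 - y\<^sup>2 = cos t * cayley_den x y"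
      and t: "t \<in> cos_pos_interval k"
      using \<open>p \<in> Qk k\<close> unfolding p Qk_def cos_pos_interval_def cayley_den_def by auto
    have den: "0 < cayley_den x y"
      using cayley_den_pos[OF disc] .
    define s where "s = t + cat_shift k"
    have "sin s = hgt x y"
      unfolding s_def sin_plus_cat_shift hgt_def eq using den by simp
    then have "cat_chart k (2 * y / cayley_den x y, s) = p"
      unfolding p cat_chart_def by (simp add: s_def inv_cayley_of_cayley[OF den])
    moreover have "s \<in> {0<..<pi}"
      using t unfolding s_def cat_shift_def cos_pos_interval_def by auto
    ultimately show "p \<in> cat_chart k ` (UNIV \<times> {0<..<pi})"
      by force
  qed
qed

lemma gtrans_image_Qk: "gtrans (cat_shift k) ` Qk k = Psi1 ` (UNIV \<times> {0<..<pi})"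
  unfolding Qk_eq_cat_chart_image image_image
  by (rule image_cong) (auto simp: cat_chart_in_Qk_and_gtrans(2))

lemma connected_Qk: "connected (Qk k)"
proof -
  have "(fst q)\<^sup>2 + (1 + sin (snd q))\<^sup>2 \<noteq> 0" if "q \<in> UNIV \<times> {0<..<pi}" for q
  proof -
    have "0 < sin (snd q)"
      using that by (auto intro: sin_gt_zero)
    then have "0 < (1 + sin (snd q))\<^sup>2"
      by simp
    then show ?thesis
      using zero_le_power2[of "fst q"] by linarith
  qed
  then have "continuous_on (UNIV \<times> {0<..<pi}) (cat_chart k)"
    unfolding cat_chart_def inv_cayley_x_def inv_cayley_y_def by (intro continuous_intros; simp)
  moreover have "connected (UNIV \<times> {0<..<pi::real} :: (real \<times> real) set)"
    by (intro convex_connected convex_Times convex_UNIV convex_real_interval)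
  ultimately show ?thesis
    unfolding Qk_eq_cat_chart_image by (rule connected_continuous_image)
qed

lemma Qk_nonempty: "Qk k \<noteq> {}"
  unfolding Qk_eq_cat_chart_image using pi_gt_zero by (auto simp: not_le)

theorem mainTheorem5:
  shows "components (Qset \<inter> {(x,y,t). x\<^sup>2 + y\<^sup>2 < 1}) = range Qk \<and>
         (\<forall>k. properly_embedded_minimal_DR (Qk k) \<and>
              (\<exists>c. gtrans c ` Qk k = Psi1 ` (UNIV \<times> {0<..<pi})))"
proof (intro conjI allI exI)
  show "components (Qset \<inter> {(x,y,t). x\<^sup>2 + y\<^sup>2 < 1}) = range Qk"
    unfolding Qset_disc_eq_Union_Qk
    by (rule components_eqI[OF refl Qk_nonempty connected_Qk connected_subset_Qk])
  fix k
  show "properly_embedded_minimal_DR (Qk k)"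
    unfolding properly_embedded_minimal_DR_def using minimal_surface_in_Qk closedin_Qk by blast
  show "gtrans (cat_shift k) ` Qk k = Psi1 ` (UNIV \<times> {0<..<pi})"
    by (rule gtrans_image_Qk)
qed

end
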